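(* Let $S$ be oriented and let $(T,b)$ be a branched ideal triangulation of $(S,V)$. Let $\epsilon_{+}$ (resp. $\epsilon_-$) be the number of abstract triangles $t$ of $T$ with $*_{(t,b)}=+1$ (resp. $-1$). Then $\epsilon_+=\epsilon_-$.
   Context: $S$ is a compact closed connected oriented surface and $V\subset S$ is a finite set of marked points with $\chi(S)-|V|<0$. An ideal triangulation of $(S,V)$ is a possibly loose triangulation of $S$ with vertex set $V$. A branching $b$ orients all edges so that on each abstract triangle $t$ the orientations are induced by a total order $v_0<v_1<v_2$ of its vertices, edges pointing to the larger endpoint. The sign $*_{(t,b)}\in\{\pm1\}$ is $+1$ if the orientation of $t$ determined by the ordered triple $(v_0,v_1,v_2)$ agrees with the orientation of $S$, and $-1$ otherwise. Thus $\sum_t *_{(t,b)}(t,b)$ is the simplicial fundamental cycle of $S$. *)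

theory Defs
  imports "HOL-Combinatorics.Permutations"
begin

text \<open>
Combinatorial model of an ideal (possibly loose) triangulation of a closed oriented
surface. Triangle t has corners (t,0),(t,1),(t,2);
the cyclic order 0,1,2 is the orientation of t induced by the orientation of S.
Side (t,i) (i<3) joins corner i to corner (i+1) mod 3. The involution g pairs sides;
the gluing of side (t,i) with side g(t,i) = (t',j) is orientation reversing,
i.e. corner i of t is identified with corner (j+1) mod 3 of t' and corner (i+1) mod 3
of t with corner j of t'. The surface S is the quotient; it is automatically an oriented
closed surface, and its vertices (the marked set V) are the classes of corners.
\<close>

definition sides :: "'f set \<Rightarrow> ('f \<times> nat) set" where
  "sides F = F \<times> {..<3}"

definition side_gluing :: "'f set \<Rightarrow> ('f \<times> nat \<Rightarrow> 'f \<times> nat) \<Rightarrow> bool" where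
  "side_gluing F g \<longleftrightarrow>
     (\<forall>s\<in>sides F. g s \<in> sides F \<and> g (g s) = s \<and> g s \<noteq> s)"

definition corner_adj :: "'f set \<Rightarrow> ('f \<times> nat \<Rightarrow> 'f \<times> nat) \<Rightarrow> 'f \<times> nat \<Rightarrow> 'f \<times> nat \<Rightarrow> bool" where
  "corner_adj F g c d \<longleftrightarrow>
     (\<exists>t i t' j. (t,i) \<in> sides F \<and> g (t,i) = (t',j) \<and>
        ((c = (t,i) \<and> d = (t', (j+1) mod 3)) \<or> (c = (t,(i+1) mod 3) \<and> d = (t',j))))"

definition corner_equiv :: "'f set \<Rightarrow> ('f \<times> nat \<Rightarrow> 'f \<times> nat) \<Rightarrow> ('f \<times> nat) rel" where
  "corner_equiv F g = {(c,d). c \<in> sides F \<and> d \<in> sides F \<and>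
      (\<lambda>x y. corner_adj F g x y \<or> corner_adj F g y x)\<^sup>*\<^sup>* c d}"

definition tri_vertices :: "'f set \<Rightarrow> ('f \<times> nat \<Rightarrow> 'f \<times> nat) \<Rightarrow> ('f \<times> nat) set set" where
  "tri_vertices F g = sides F // corner_equiv F g"

definition tri_edges :: "'f set \<Rightarrow> ('f \<times> nat \<Rightarrow> 'f \<times> nat) \<Rightarrow> ('f \<times> nat) set set" where
  "tri_edges F g = (\<lambda>s. {s, g s}) ` sides F"

definition euler_char :: "'f set \<Rightarrow> ('f \<times> nat \<Rightarrow> 'f \<times> nat) \<Rightarrow> int" where
  "euler_char F g = int (card (tri_vertices F g)) - int (card (tri_edges F g)) + int (card F)"

text \<open>connectedness of S = connectedness of the dual graph\<close>
definition tri_connected :: "'f set \<Rightarrow> ('f \<times> nat \<Rightarrow> 'f \<times> nat) \<Rightarrow> bool" where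
  "tri_connected F g \<longleftrightarrow>
     (\<forall>t\<in>F. \<forall>t'\<in>F. (\<lambda>x y. \<exists>i<3. x \<in> F \<and> fst (g (x,i)) = y)\<^sup>*\<^sup>* t t')"

definition oriented_ideal_triangulation :: "'f set \<Rightarrow> ('f \<times> nat \<Rightarrow> 'f \<times> nat) \<Rightarrow> bool" where
  "oriented_ideal_triangulation F g \<longleftrightarrow>
     finite F \<and> side_gluing F g \<and> tri_connected F g \<and>
     euler_char F g - int (card (tri_vertices F g)) < 0"

text \<open>A branching: for every triangle t, b t is the rank function of a total order on its
corners (corner c has rank b t c, so b t permutes {0,1,2}); the edge orientations induced
on each triangle (towards the larger endpoint) agree across every gluing.\<close>
definition branching :: "'f set \<Rightarrow> ('f \<times> nat \<Rightarrow> 'f \<times> nat) \<Rightarrow> ('f \<Rightarrow> nat \<Rightarrow> nat) \<Rightarrow> bool" where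
  "branching F g b \<longleftrightarrow>
     (\<forall>t\<in>F. b t permutes {..<3}) \<and>
     (\<forall>t i t' j. (t,i) \<in> sides F \<longrightarrow> g (t,i) = (t',j) \<longrightarrow>
        (b t i < b t ((i+1) mod 3) \<longleftrightarrow> b t' ((j+1) mod 3) < b t' j))"

text \<open>The sign *_(t,b): the ordered triple (v0,v1,v2) of corners, v_k = inv (b t) k, is
compared with the orientation (0,1,2) of t; it agrees iff the permutation k \<mapsto> v_k is even.\<close>
definition branch_sign :: "('f \<Rightarrow> nat \<Rightarrow> nat) \<Rightarrow> 'f \<Rightarrow> int" where
  "branch_sign b t = sign (inv (b t))"

end

theory Submission imports Defs begin

text \<open>Call a side of a triangle ascending if the branching orients it along the cyclic order
of the triangle. Gluings reverse the cyclic orders while the branching is consistent across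
them, so the side pairing exchanges ascending and descending sides, and there are equally many
of each. On a single triangle, the number of ascending minus the number of descending sides is
its sign, 2 - 1 or 1 - 2. Summing over all triangles gives \<open>\<epsilon>\<^sub>+ - \<epsilon>\<^sub>- = 0\<close>.\<close>

definition side_ascending :: "('f \<Rightarrow> nat \<Rightarrow> nat) \<Rightarrow> 'f \<times> nat \<Rightarrow> bool" where
  "side_ascending b s \<longleftrightarrow> b (fst s) (snd s) < b (fst s) ((snd s + 1) mod 3)"

lemma card_less_3_filter:
  "card {i::nat. i < 3 \<and> Q i} = of_bool (Q 0) + of_bool (Q 1) + of_bool (Q 2)"
proof -
  have "{i::nat. i < 3 \<and> Q i} = {..<3} \<inter> {i. Q i}" by auto
  then have "card {i::nat. i < 3 \<and> Q i} = (\<Sum>i<3. of_bool (Q i))"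
    using sum.inter_restrict[of "{..<3::nat}" "\<lambda>_. 1::nat" "{i. Q i}"] by simp
  then show ?thesis by (simp add: numeral_3_eq_3 numeral_2_eq_2)
qed

lemma sign_permutes_3_eq_cyclic_ascents:
  fixes p :: "nat \<Rightarrow> nat"
  assumes p: "p permutes {..<3}"
  shows "sign p = int (card {i. i < 3 \<and> p i < p ((i + 1) mod 3)})
                 - int (card {i. i < 3 \<and> \<not> p i < p ((i + 1) mod 3)})"
proof -
  have inj: "inj p" using p permutes_inj by blast
  have distinct: "p 0 \<noteq> p 1" "p 0 \<noteq> p 2" "p 1 \<noteq> p 2" by (simp_all add: inj_eq[OF inj])
  have range: "p 0 < 3" "p 1 < 3" "p 2 < 3" using permutes_in_image[OF p] by auto
  have p_eq: "p = (\<lambda>x. if x = 0 then p 0 else if x = 1 then p 1 else if x = 2 then p 2 else x)"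
    using p by (auto simp: fun_eq_iff numeral_3_eq_3 permutes_not_in)
  let ?asc = "\<lambda>i. p i < p ((i + 1) mod 3)"
  have ascents: "int (card {i. i < 3 \<and> ?asc i}) - int (card {i. i < 3 \<and> \<not> ?asc i})
      = (if p 0 < p 1 then 1 else -1) + (if p 1 < p 2 then 1 else -1) + (if p 2 < p 0 then 1 else -1)"
    by (simp only: card_less_3_filter) (simp add: numeral_2_eq_2)
  have transp: "sign (transpose (0::nat) 1) = -1" "sign (transpose (1::nat) 2) = -1"
    "sign (transpose (0::nat) 2) = -1" "permutation (transpose (a::nat) b)" for a b
    by (simp_all add: sign_swap_id permutation_swap_id)
  consider "p 0 = 0" "p 1 = 1" "p 2 = 2" | "p 0 = 1" "p 1 = 0" "p 2 = 2"
    | "p 0 = 0" "p 1 = 2" "p 2 = 1" | "p 0 = 2" "p 1 = 1" "p 2 = 0"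
    | "p 0 = 1" "p 1 = 2" "p 2 = 0" | "p 0 = 2" "p 1 = 0" "p 2 = 1"
    using range distinct by (auto simp: numeral_3_eq_3 less_Suc_eq)
  then show ?thesis
  proof cases
    case 1
    then have "p = id" by (subst p_eq) (auto simp: fun_eq_iff)
    then show ?thesis using ascents 1 by simp
  next
    case 2
    then have "p = transpose 0 1" by (subst p_eq) (auto simp: fun_eq_iff transpose_def)
    then show ?thesis using ascents 2 transp by simp
  next
    case 3
    then have "p = transpose 1 2" by (subst p_eq) (auto simp: fun_eq_iff transpose_def)
    then show ?thesis using ascents 3 transp by simp
  next
    case 4
    then have "p = transpose 0 2" by (subst p_eq) (auto simp: fun_eq_iff transpose_def)
    then show ?thesis using ascents 4 transp by simp
  next
    case 5
    then have "p = transpose 0 1 \<circ> transpose 1 2"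
      by (subst p_eq) (auto simp: fun_eq_iff transpose_def)
    then show ?thesis using ascents 5 transp by (simp add: sign_compose)
  next
    case 6
    then have "p = transpose 1 2 \<circ> transpose 0 1"
      by (subst p_eq) (auto simp: fun_eq_iff transpose_def)
    then show ?thesis using ascents 6 transp by (simp add: sign_compose)
  qed
qed

lemma branch_sign_eq_ascending_sides:
  assumes "b t permutes {..<3}"
  shows "branch_sign b t = int (card {i. i < 3 \<and> side_ascending b (t, i)})
                           - int (card {i. i < 3 \<and> \<not> side_ascending b (t, i)})"
proof -
  have "permutation (b t)" using assms permutation_permutes by blast
  then show ?thesis using sign_permutes_3_eq_cyclic_ascents[OF assms]
    by (simp add: branch_sign_def side_ascending_def sign_inverse)
qed

lemma card_eq_if_involution_swaps:
  assumes "\<And>s. s \<in> S \<Longrightarrow> g s \<in> S \<and> g (g s) = s"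
    and "\<And>s. s \<in> S \<Longrightarrow> P (g s) \<longleftrightarrow> \<not> P s"
  shows "card {s \<in> S. P s} = card {s \<in> S. \<not> P s}"
  by (rule bij_betw_same_card[of g], rule bij_betw_byWitness[where f' = g]) (use assms in auto)

lemma card_sides_filter:
  assumes "finite F"
  shows "card {s \<in> sides F. P s} = (\<Sum>t\<in>F. card {i. i < 3 \<and> P (t, i)})"
proof -
  have "{s \<in> sides F. P s} = Sigma F (\<lambda>t. {i. i < 3 \<and> P (t, i)})"
    by (auto simp: sides_def)
  then show ?thesis using assms by (simp add: card_SigmaI)
qed

lemma side_ascending_gluing:
  assumes "side_gluing F g" "branching F g b" "s \<in> sides F"
  shows "side_ascending b (g s) \<longleftrightarrow> \<not> side_ascending b s"
proof -
  obtain t i where s: "s = (t, i)" by (cases s)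
  obtain t' j where gs: "g (t, i) = (t', j)" by (cases "g (t, i)")
  have "g (t, i) \<in> sides F" using assms(1,3) unfolding s side_gluing_def by blast
  then have t': "t' \<in> F" and j: "j < 3" by (simp_all add: gs sides_def)
  have "b t' permutes {..<3}" using assms(2) t' unfolding branching_def by blast
  then have "inj (b t')" by (rule permutes_inj)
  moreover have "j \<noteq> (j + 1) mod 3" using j by (simp add: mod_Suc)
  ultimately have "b t' j \<noteq> b t' ((j + 1) mod 3)" by (simp add: inj_eq)
  moreover have "b t i < b t ((i + 1) mod 3) \<longleftrightarrow> b t' ((j + 1) mod 3) < b t' j"
    using assms(2,3) gs unfolding s branching_def by simp
  ultimately show ?thesis
    unfolding s side_ascending_def gs by auto
qed

lemma sum_plus_minus_one_eq_card_diff: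
  assumes "finite F" "\<And>t. t \<in> F \<Longrightarrow> f t = 1 \<or> f t = -1"
  shows "(\<Sum>t\<in>F. f t) = int (card {t \<in> F. f t = 1}) - int (card {t \<in> F. f t = -1})"
proof -
  have "F \<inter> {t. f t = 1} = {t \<in> F. f t = 1}" "F \<inter> - {t. f t = 1} = {t \<in> F. f t = -1}"
    using assms(2) by fastforce+
  moreover have "(\<Sum>t\<in>F. f t) = (\<Sum>t\<in>F. if f t = 1 then 1 else -1)"
    using assms(2) by (intro sum.cong) auto
  ultimately show ?thesis using assms(1) by (simp add: sum.If_cases)
qed

theorem lemma2p1:
  fixes F :: "'f set" and g :: "'f \<times> nat \<Rightarrow> 'f \<times> nat" and b :: "'f \<Rightarrow> nat \<Rightarrow> nat"
  assumes "oriented_ideal_triangulation F g"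
    and "branching F g b"
  shows "card {t \<in> F. branch_sign b t = 1} = card {t \<in> F. branch_sign b t = -1}"
proof -
  have fin: "finite F" and glue: "side_gluing F g"
    using assms(1) by (auto simp: oriented_ideal_triangulation_def)
  have sign: "branch_sign b t = int (card {i. i < 3 \<and> side_ascending b (t, i)})
      - int (card {i. i < 3 \<and> \<not> side_ascending b (t, i)})" if "t \<in> F" for t
    using assms(2) that by (simp add: branching_def branch_sign_eq_ascending_sides)
  have "card {s \<in> sides F. side_ascending b s} = card {s \<in> sides F. \<not> side_ascending b s}"
    by (rule card_eq_if_involution_swaps[where g = g])
      (use glue side_ascending_gluing[OF glue assms(2)] in \<open>auto simp: side_gluing_def\<close>)
  then have "(\<Sum>t\<in>F. branch_sign b t) = 0"
    by (simp add: sign sum_subtractf card_sides_filter[OF fin] flip: of_nat_sum)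
  moreover have "branch_sign b t = 1 \<or> branch_sign b t = -1" for t
    by (simp add: branch_sign_def sign_def)
  ultimately show ?thesis using sum_plus_minus_one_eq_card_diff[OF fin] by force
qed

end
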